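(* Let $0<t_0\le1/2$. For every integer $k\ge0$, every $t\in[t_0,1]$, every integer $0\le j\le 2k$ and all $(m_1,\eta_1)\in\mathbb Z\times\mathbb R$, $$|\partial_{\eta_1}^j\rho_k|\le 8^j\frac{(2k)!}{(2k-j)!}\rho_{k-\frac j2}.$$
   Context: For $\sigma\ge0$ and $t\in[t_0,1]$, $\rho_\sigma(m_1,\eta_1)=\big((t-t_0)\eta_1^2+(t-t_0)^2m_1\eta_1+\frac{(t-t_0)^3}{3}m_1^2\big)^\sigma$ (the base is nonnegative), with the convention $\rho_0=1$. *)

theory Defs
  imports "HOL-Analysis.Analysis"
begin

definition rho_base :: "real \<Rightarrow> real \<Rightarrow> real \<Rightarrow> real \<Rightarrow> real" where
  "rho_base t0 t m eta = (t - t0) * eta^2 + (t - t0)^2 * m * eta + (t - t0)^3 / 3 * m^2"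

definition rho :: "real \<Rightarrow> real \<Rightarrow> real \<Rightarrow> real \<Rightarrow> real \<Rightarrow> real" where
  "rho t0 t \<sigma> m eta = (if \<sigma> = 0 then 1 else (rho_base t0 t m eta) powr \<sigma>)"

end

theory Submission
  imports Defs "HOL-Computational_Algebra.Polynomial"
begin

text \<open>For \<open>0 \<le> a = t - t0 \<le> 1\<close> the base is a quadratic polynomial \<open>B\<close> in \<open>\<eta>\<close> with
  \<open>B \<ge> 0\<close>, \<open>B'\<^sup>2 = 4 a B - a\<^sup>4 m\<^sup>2 / 3 \<le> 4 B\<close>, \<open>\<bar>B''\<bar> = 2 a \<le> 2\<close> and \<open>B''' = 0\<close>,
  and \<open>\<rho>\<^sub>k = B\<^sup>k\<close>. In the Leibniz rule for the \<open>j\<close>-th derivative of \<open>B \<cdot> B\<^sup>k\<close> only three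
  terms survive, and by induction on \<open>k\<close> the three bounds on \<open>B\<close> give
  \<open>\<bar>D\<^sup>j (B\<^sup>k)\<bar> \<le> j! (2k choose j) B^(k - j/2)\<close>; the constants propagate by Pascal's rule
  applied twice.\<close>

lemma two_times_choose_two: "2 * (j choose 2) = j * (j - 1)"
proof -
  have "even (j * (j - 1))" by (cases "even j") auto
  then show ?thesis unfolding choose_two by simp
qed

lemma fact_binomial_add_two:
  "fact j * real ((n + 2) choose j) = fact j * real (n choose j)
     + 2 * real j * (fact (j - 1) * real (n choose (j - 1)))
     + 2 * real (j choose 2) * (fact (j - 2) * real (n choose (j - 2)))"
proof (cases "j < 2")
  case True
  then consider "j = 0" | "j = 1" by linarith
  then show ?thesis by cases (simp_all add: numeral_2_eq_2)
next
  case False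
  then obtain i where j: "j = i + 2" by (metis add.commute le_Suc_ex not_less)
  have pascal: "real ((n + 2) choose j)
      = real (n choose i) + 2 * real (n choose (i + 1)) + real (n choose (i + 2))"
    by (simp add: j numeral_2_eq_2)
  have choose: "real (j choose 2) = real j * (real j - 1) / 2"
    using arg_cong[OF two_times_choose_two[of j], of real] False by simp
  have facts: "fact j = real j * (real j - 1) * fact i" "fact (j - 1) = (real j - 1) * fact i"
    by (simp_all add: j numeral_2_eq_2 algebra_simps)
  have "j - 1 = i + 1" "j - 2 = i" using j by simp_all
  then show ?thesis unfolding pascal choose facts by (simp add: j algebra_simps)
qed

lemma binomial_mult_power_diff:
  fixes r :: "'a::comm_semiring_1"
  shows "of_nat (n choose i) * r ^ (n - i) * r ^ e = of_nat (n choose i) * r ^ (n + e - i)"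
proof (cases "i \<le> n")
  case True
  then show ?thesis by (simp add: power_add[symmetric] mult.assoc)
qed (simp add: binomial_eq_0)

lemma higher_deriv_poly: "(deriv ^^ j) (poly p) = poly ((pderiv ^^ j) p)"
proof (induction j)
  case (Suc j)
  then show ?case by (simp add: poly_DERIV[THEN DERIV_imp_deriv])
qed simp

lemma higher_pderiv_one: "(pderiv ^^ Suc j) 1 = 0"
  by (induction j) simp_all

text \<open>The truncated indices \<open>j - 1\<close> and \<open>j - 2\<close> only occur with the factors \<open>j\<close> and
  \<open>j choose 2\<close>, which vanish whenever the truncation takes effect.\<close>

lemma higher_pderiv_mult_quadratic:
  fixes B P :: "'a::{comm_semiring_1,semiring_no_zero_divisors} poly"
  assumes "pderiv (pderiv (pderiv B)) = 0"
  shows "(pderiv ^^ j) (B * P) = B * (pderiv ^^ j) P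
     + of_nat j * (pderiv B * (pderiv ^^ (j - 1)) P)
     + of_nat (j choose 2) * (pderiv (pderiv B) * (pderiv ^^ (j - 2)) P)"
proof (induction j)
  case 0 then show ?case by (simp add: binomial_eq_0)
next
  case (Suc j)
  have "Suc j choose 2 = j + (j choose 2)" by (simp add: numeral_2_eq_2)
  with Suc show ?case
    by (cases j; cases "j - 1")
      (simp_all add: pderiv_add pderiv_mult assms algebra_simps numeral_2_eq_2 mult_2_right)
qed

lemma leibniz_quadratic_bound:
  fixes r b1 b2 :: real and p :: "nat \<Rightarrow> real"
  assumes r: "0 \<le> r" and b1: "\<bar>b1\<bar> \<le> 2 * r" and b2: "\<bar>b2\<bar> \<le> 2"
    and p: "\<And>i. \<bar>p i\<bar> \<le> fact i * real (n choose i) * r ^ (n - i)"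
  shows "\<bar>r\<^sup>2 * p j + real j * (b1 * p (j - 1)) + real (j choose 2) * (b2 * p (j - 2))\<bar>
    \<le> fact j * real ((n + 2) choose j) * r ^ (n + 2 - j)"
proof -
  define F where "F i = fact i * real (n choose i)" for i
  have p': "\<bar>p i\<bar> \<le> F i * r ^ (n - i)" for i
    using p unfolding F_def .
  have shift: "F i * r ^ (n - i) * r ^ e = F i * r ^ (n + e - i)" for i e
    unfolding F_def using binomial_mult_power_diff[of n i r e] by (simp add: mult.assoc)
  have T0: "\<bar>r\<^sup>2 * p i\<bar> \<le> F i * r ^ (n + 2 - i)" for i
  proof -
    have "\<bar>r\<^sup>2 * p i\<bar> \<le> F i * r ^ (n - i) * r\<^sup>2"
      using mult_left_mono[OF p'[of i], of "r\<^sup>2"] by (simp add: abs_mult mult.commute)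
    then show ?thesis by (simp only: shift)
  qed
  have T1: "\<bar>b1 * p i\<bar> \<le> 2 * (F i * r ^ (n + 1 - i))" for i
  proof -
    have "\<bar>b1 * p i\<bar> \<le> 2 * (F i * r ^ (n - i) * r ^ 1)"
      using mult_mono[OF b1 p'[of i]] r by (simp add: abs_mult mult_ac)
    then show ?thesis by (simp only: shift)
  qed
  have T2: "\<bar>b2 * p i\<bar> \<le> 2 * (F i * r ^ (n - i))" for i
    using mult_mono[OF b2 p'[of i]] by (simp add: abs_mult)
  have e1: "real j * (2 * (F (j - 1) * r ^ (n + 1 - (j - 1))))
      = 2 * real j * F (j - 1) * r ^ (n + 2 - j)"
    by (cases j) simp_all
  have e2: "real (j choose 2) * (2 * (F (j - 2) * r ^ (n - (j - 2))))
      = 2 * real (j choose 2) * F (j - 2) * r ^ (n + 2 - j)"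
    by (cases "j < 2") (simp_all add: binomial_eq_0)
  have "\<bar>r\<^sup>2 * p j + real j * (b1 * p (j - 1)) + real (j choose 2) * (b2 * p (j - 2))\<bar>
      \<le> \<bar>r\<^sup>2 * p j\<bar> + real j * \<bar>b1 * p (j - 1)\<bar> + real (j choose 2) * \<bar>b2 * p (j - 2)\<bar>"
    by (simp add: abs_mult order_trans[OF abs_triangle_ineq add_mono])
  also have "\<dots> \<le> F j * r ^ (n + 2 - j) + real j * (2 * (F (j - 1) * r ^ (n + 1 - (j - 1))))
      + real (j choose 2) * (2 * (F (j - 2) * r ^ (n - (j - 2))))"
    by (intro add_mono mult_left_mono T0 T1 T2) simp_all
  also have "\<dots> = (F j + 2 * real j * F (j - 1) + 2 * real (j choose 2) * F (j - 2)) * r ^ (n + 2 - j)"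
    by (simp only: e1 e2 distrib_right)
  also have "\<dots> = fact j * real ((n + 2) choose j) * r ^ (n + 2 - j)"
    unfolding F_def fact_binomial_add_two ..
  finally show ?thesis .
qed

lemma higher_pderiv_power_bound:
  fixes B :: "real poly" and x :: real
  assumes B3: "pderiv (pderiv (pderiv B)) = 0" and B0: "0 \<le> poly B x"
    and B1: "\<bar>poly (pderiv B) x\<bar> \<le> 2 * sqrt (poly B x)"
    and B2: "\<bar>poly (pderiv (pderiv B)) x\<bar> \<le> 2"
  shows "\<bar>poly ((pderiv ^^ j) (B ^ k)) x\<bar>
    \<le> fact j * real ((2 * k) choose j) * sqrt (poly B x) ^ (2 * k - j)"
proof (induction k arbitrary: j)
  case 0
  then show ?case by (cases j) (simp_all add: higher_pderiv_one del: funpow.simps)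
next
  case (Suc k)
  let ?r = "sqrt (poly B x)"
  let ?p = "\<lambda>i. poly ((pderiv ^^ i) (B ^ k)) x"
  have "poly ((pderiv ^^ j) (B ^ Suc k)) x = ?r\<^sup>2 * ?p j + real j * (poly (pderiv B) x * ?p (j - 1))
      + real (j choose 2) * (poly (pderiv (pderiv B)) x * ?p (j - 2))"
    using B0 by (simp add: higher_pderiv_mult_quadratic[OF B3])
  also have "\<bar>\<dots>\<bar> \<le> fact j * real ((2 * k + 2) choose j) * ?r ^ (2 * k + 2 - j)"
    by (rule leibniz_quadratic_bound[OF _ B1 B2 Suc.IH]) (simp add: B0)
  finally show ?case by simp
qed

definition rho_base_poly :: "real \<Rightarrow> real \<Rightarrow> real poly" where
  "rho_base_poly a m = [:a ^ 3 / 3 * m\<^sup>2, a\<^sup>2 * m, a:]"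

lemma poly_rho_base_poly: "poly (rho_base_poly (t - t0) m) e = rho_base t0 t m e"
  unfolding rho_base_poly_def rho_base_def by (simp add: algebra_simps power2_eq_square)

lemma rho_base_poly_nonneg:
  assumes "0 \<le> a"
  shows "0 \<le> poly (rho_base_poly a m) e"
proof -
  have "poly (rho_base_poly a m) e = a * (e + a * m / 2)\<^sup>2 + a ^ 3 * m\<^sup>2 / 12"
    unfolding rho_base_poly_def by (simp add: power2_eq_square power3_eq_cube algebra_simps)
  then show ?thesis using assms by simp
qed

lemma pderiv_rho_base_poly_bound:
  assumes "0 \<le> a" "a \<le> 1"
  shows "\<bar>poly (pderiv (rho_base_poly a m)) e\<bar> \<le> 2 * sqrt (poly (rho_base_poly a m) e)"
proof -
  let ?B = "poly (rho_base_poly a m) e"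
  have "(poly (pderiv (rho_base_poly a m)) e)\<^sup>2 = 4 * a * ?B - a ^ 4 * m\<^sup>2 / 3"
    unfolding rho_base_poly_def
    by (simp add: pderiv_pCons power2_eq_square power3_eq_cube power4_eq_xxxx algebra_simps)
  also have "\<dots> \<le> 4 * ?B"
  proof -
    have "a * ?B \<le> ?B"
      using mult_right_mono[OF assms(2) rho_base_poly_nonneg[OF assms(1)]] by simp
    moreover have "0 \<le> a ^ 4 * m\<^sup>2 / 3" by simp
    ultimately show ?thesis by linarith
  qed
  finally show ?thesis
    using real_sqrt_le_mono real_sqrt_abs by (metis real_sqrt_four real_sqrt_mult)
qed

lemma second_pderiv_rho_base_poly_bound:
  "0 \<le> a \<Longrightarrow> a \<le> 1 \<Longrightarrow> \<bar>poly (pderiv (pderiv (rho_base_poly a m))) e\<bar> \<le> 2"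
  unfolding rho_base_poly_def by (simp add: pderiv_pCons)

lemma third_pderiv_rho_base_poly: "pderiv (pderiv (pderiv (rho_base_poly a m))) = 0"
  unfolding rho_base_poly_def by (simp add: pderiv_pCons)

lemma rho_nonneg: "0 \<le> rho t0 t \<sigma> m e"
  by (simp add: rho_def)

lemma rho_half_integer:
  assumes "t0 \<le> t"
  shows "rho t0 t (real n / 2) m e = sqrt (rho_base t0 t m e) ^ n"
proof (cases "n = 0 \<or> rho_base t0 t m e = 0")
  case True
  then show ?thesis by (auto simp: rho_def)
next
  case False
  moreover have "0 \<le> rho_base t0 t m e"
    using rho_base_poly_nonneg[of "t - t0"] assms by (simp add: poly_rho_base_poly)
  ultimately show ?thesis
    by (simp add: rho_def powr_half_sqrt_powr powr_realpow real_sqrt_power)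
qed

lemma rho_eq_poly_power:
  assumes "t0 \<le> t"
  shows "rho t0 t (real k) m = poly (rho_base_poly (t - t0) m ^ k)"
proof
  fix e
  have "rho t0 t (real (2 * k) / 2) m e = sqrt (rho_base t0 t m e) ^ (2 * k)"
    using rho_half_integer[OF assms] .
  then show "rho t0 t (real k) m e = poly (rho_base_poly (t - t0) m ^ k) e"
    using rho_base_poly_nonneg[of "t - t0" m e] assms
    by (simp add: power_mult poly_power poly_rho_base_poly)
qed

lemma rho_minus_half:
  assumes "t0 \<le> t" "j \<le> 2 * k"
  shows "rho t0 t (real k - real j / 2) m e = sqrt (rho_base t0 t m e) ^ (2 * k - j)"
proof -
  have "real k - real j / 2 = real (2 * k - j) / 2"
    using assms(2) by (simp add: of_nat_diff)
  then show ?thesis by (simp only: rho_half_integer[OF assms(1)])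
qed

lemma higher_deriv_rho_bound:
  assumes "t0 \<le> t" "t - t0 \<le> 1" "j \<le> 2 * k"
  shows "\<bar>(deriv ^^ j) (rho t0 t (real k) m) e\<bar>
    \<le> fact (2 * k) / fact (2 * k - j) * rho t0 t (real k - real j / 2) m e"
proof -
  define B where "B = rho_base_poly (t - t0) m"
  have a: "0 \<le> t - t0" "t - t0 \<le> 1" using assms by auto
  have "\<bar>(deriv ^^ j) (rho t0 t (real k) m) e\<bar> = \<bar>poly ((pderiv ^^ j) (B ^ k)) e\<bar>"
    unfolding rho_eq_poly_power[OF assms(1)] higher_deriv_poly B_def ..
  also have "\<dots> \<le> fact j * real ((2 * k) choose j) * sqrt (poly B e) ^ (2 * k - j)"
    unfolding B_def
    by (intro higher_pderiv_power_bound third_pderiv_rho_base_poly rho_base_poly_nonneg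
        pderiv_rho_base_poly_bound second_pderiv_rho_base_poly_bound a)
  also have "\<dots> = fact (2 * k) / fact (2 * k - j) * rho t0 t (real k - real j / 2) m e"
    unfolding rho_minus_half[OF assms(1,3)] B_def poly_rho_base_poly
    using binomial_fact[OF assms(3), where 'a = real] by (simp add: field_simps)
  finally show ?thesis .
qed

theorem lemma4p1:
  fixes t0 t eta :: real and k j :: nat and m :: int
  assumes "0 < t0" "t0 \<le> 1/2" "t0 \<le> t" "t \<le> 1" "j \<le> 2 * k"
  shows "\<bar>((deriv ^^ j) (\<lambda>e. rho t0 t (real k) (real_of_int m) e)) eta\<bar>
    \<le> 8 ^ j * (fact (2 * k) / fact (2 * k - j)) * rho t0 t (real k - real j / 2) (real_of_int m) eta"
proof -
  have "\<bar>((deriv ^^ j) (\<lambda>e. rho t0 t (real k) (real_of_int m) e)) eta\<bar>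
      \<le> 1 * (fact (2 * k) / fact (2 * k - j) * rho t0 t (real k - real j / 2) (real_of_int m) eta)"
    using higher_deriv_rho_bound assms by simp
  also have "\<dots> \<le> 8 ^ j * (fact (2 * k) / fact (2 * k - j) * rho t0 t (real k - real j / 2) (real_of_int m) eta)"
    by (intro mult_right_mono) (simp_all add: rho_nonneg)
  finally show ?thesis by (simp only: mult.assoc)
qed

end
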